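(* Let $\Delta\vdash t$ be a closed nominal term-in-context and $\hat t=\mathcal{T}(\Delta,t)$. If $\pi_1\cdot X$ and $\pi_2\cdot X$ are two occurrences of the same variable $X$ in $t$ and $X(\overline{xs_1})$, $X(\overline{xs_2})$ are their respective translations in $\hat t$, then $\pi_1^{-1}\cdot\overline{xs_1}=\pi_2^{-1}\cdot\overline{xs_2}$ (as lists, with permutations applied elementwise).
   Context: Nominal terms: $s,t ::= a \mid \pi\cdot X \mid [a]s \mid f\,s \mid (s_1,\ldots,s_n)$ over atoms, variables, function symbols and finite-support permutations $\pi$ of atoms. A freshness context $\Delta$ is a set of constraints $a\#X$. $\Delta\vdash t$ is closed if: (1) every atom occurrence $a$ in $t$ lies under an abstraction $[a]$; (2) if $\pi\cdot X$ is in the scope of an abstraction of $\pi(a)$ then every occurrence $\pi'\cdot X$ of $X$ in $t$ is in the scope of an abstraction of $\pi'(a)$, or $a\#X\in\Delta$; (3) for two occurrences $\pi_1\cdot X,\pi_2\cdot X$ and $a$ with $\pi_1(a)\neq\pi_2(a)$, if $a$ is not abstracted in one of the occurrences then $a\#X\in\Delta$. Translation: $\Lambda_t(X)$ is the set of atoms $a$ such that some occurrence of $X$ in $t$ is in the scope of $[a]$. With a fixed total order on atoms, $\mathcal{T}(\Delta,t)$ is the CRS meta-term obtained from $t$ by replacing each occurrence $\pi\cdot X$ by $X(\overline{xs})$ with $\overline{xs}=\pi\cdot xs$, where $xs$ is the ascending list of $\{\pi^{-1}(a)\mid a\in\Lambda_t(X)\}\setminus\{a\mid a\#X\in\Delta\}$;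 other constructs are kept unchanged. *)

theory Defs
  imports "HOL-Combinatorics.Perm"
begin

(* Atoms are natural numbers; the fixed total order on atoms is the usual order on nat.
   Permutations are finite-support permutations ('a perm from HOL-Combinatorics). *)
type_synonym atom = nat

datatype ('f, 'v) nterm =
    NAtom atom
  | NSusp "atom perm" 'v
  | NAbs atom "('f, 'v) nterm"
  | NFn 'f "('f, 'v) nterm"
  | NTup "('f, 'v) nterm list"

(* CRS meta-terms produced by the translation *)
datatype ('f, 'v) mterm =
    MAtom atom
  | MVar 'v "atom list"
  | MAbs atom "('f, 'v) mterm"
  | MFn 'f "('f, 'v) mterm"
  | MTup "('f, 'v) mterm list"

(* Occurrences of variables: (position, permutation, variable, atoms abstracted above it) *)
primrec var_occs :: "('f, 'v) nterm \<Rightarrow> (nat list \<times> atom perm \<times> 'v \<times> atom set) set"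
  and var_occs_list :: "nat \<Rightarrow> ('f, 'v) nterm list \<Rightarrow> (nat list \<times> atom perm \<times> 'v \<times> atom set) set"
where
  "var_occs (NAtom a) = {}"
| "var_occs (NSusp \<pi> X) = {([], \<pi>, X, {})}"
| "var_occs (NAbs a s) = (\<lambda>(p, \<pi>, X, B). (0 # p, \<pi>, X, insert a B)) ` var_occs s"
| "var_occs (NFn f s) = (\<lambda>(p, \<pi>, X, B). (0 # p, \<pi>, X, B)) ` var_occs s"
| "var_occs (NTup ts) = var_occs_list 0 ts"
| "var_occs_list i [] = {}"
| "var_occs_list i (s # ss) =
     (\<lambda>(p, \<pi>, X, B). (i # p, \<pi>, X, B)) ` var_occs s \<union> var_occs_list (Suc i) ss"

(* Occurrences of atoms: (position, atom, atoms abstracted above it) *)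
primrec atom_occs :: "('f, 'v) nterm \<Rightarrow> (nat list \<times> atom \<times> atom set) set"
  and atom_occs_list :: "nat \<Rightarrow> ('f, 'v) nterm list \<Rightarrow> (nat list \<times> atom \<times> atom set) set"
where
  "atom_occs (NAtom a) = {([], a, {})}"
| "atom_occs (NSusp \<pi> X) = {}"
| "atom_occs (NAbs a s) = (\<lambda>(p, b, B). (0 # p, b, insert a B)) ` atom_occs s"
| "atom_occs (NFn f s) = (\<lambda>(p, b, B). (0 # p, b, B)) ` atom_occs s"
| "atom_occs (NTup ts) = atom_occs_list 0 ts"
| "atom_occs_list i [] = {}"
| "atom_occs_list i (s # ss) =
     (\<lambda>(p, b, B). (i # p, b, B)) ` atom_occs s \<union> atom_occs_list (Suc i) ss"

primrec mvar_occs :: "('f, 'v) mterm \<Rightarrow> (nat list \<times> 'v \<times> atom list) set"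
  and mvar_occs_list :: "nat \<Rightarrow> ('f, 'v) mterm list \<Rightarrow> (nat list \<times> 'v \<times> atom list) set"
where
  "mvar_occs (MAtom a) = {}"
| "mvar_occs (MVar X xs) = {([], X, xs)}"
| "mvar_occs (MAbs a s) = (\<lambda>(p, X, xs). (0 # p, X, xs)) ` mvar_occs s"
| "mvar_occs (MFn f s) = (\<lambda>(p, X, xs). (0 # p, X, xs)) ` mvar_occs s"
| "mvar_occs (MTup ts) = mvar_occs_list 0 ts"
| "mvar_occs_list i [] = {}"
| "mvar_occs_list i (s # ss) =
     (\<lambda>(p, X, xs). (i # p, X, xs)) ` mvar_occs s \<union> mvar_occs_list (Suc i) ss"

(* A freshness context: the pair (a, X) stands for the constraint a # X *)
type_synonym 'v fctx = "(atom \<times> 'v) set"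

definition closed_nterm :: "'v fctx \<Rightarrow> ('f, 'v) nterm \<Rightarrow> bool" where
  "closed_nterm \<Delta> t \<longleftrightarrow>
     \<comment> \<open>(1) every atom occurrence a lies under an abstraction [a]\<close>
     (\<forall>(p, a, B) \<in> atom_occs t. a \<in> B) \<and>
     \<comment> \<open>(2)\<close>
     (\<forall>(p, \<pi>, X, B) \<in> var_occs t. \<forall>a. Perm.apply (\<pi>) a \<in> B \<longrightarrow>
        (\<forall>(p', \<pi>', X', B') \<in> var_occs t. X' = X \<longrightarrow> Perm.apply (\<pi>') a \<in> B') \<or> (a, X) \<in> \<Delta>) \<and>
     \<comment> \<open>(3)\<close>
     (\<forall>(p1, \<pi>1, X1, B1) \<in> var_occs t. \<forall>(p2, \<pi>2, X2, B2) \<in> var_occs t. \<forall>a.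
        X1 = X2 \<and> Perm.apply (\<pi>1) a \<noteq> Perm.apply (\<pi>2) a \<and> (Perm.apply (\<pi>1) a \<notin> B1 \<or> Perm.apply (\<pi>2) a \<notin> B2)
          \<longrightarrow> (a, X1) \<in> \<Delta>)"

definition Lam :: "('f, 'v) nterm \<Rightarrow> 'v \<Rightarrow> atom set" where
  "Lam t X = {a. \<exists>p \<pi> B. (p, \<pi>, X, B) \<in> var_occs t \<and> a \<in> B}"

(* the translation T(Delta, t); t0 is the whole term (used for Lambda), the second
   argument is the subterm currently being translated *)
primrec trans_aux :: "'v fctx \<Rightarrow> ('f, 'v) nterm \<Rightarrow> ('f, 'v) nterm \<Rightarrow> ('f, 'v) mterm"
  and trans_aux_list :: "'v fctx \<Rightarrow> ('f, 'v) nterm \<Rightarrow> ('f, 'v) nterm list \<Rightarrow> ('f, 'v) mterm list"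
where
  "trans_aux \<Delta> t0 (NAtom a) = MAtom a"
| "trans_aux \<Delta> t0 (NSusp \<pi> X) =
     MVar X (map (\<lambda>a. Perm.apply (\<pi>) a)
       (sorted_list_of_set ((\<lambda>a. Perm.apply (inverse \<pi>) a) ` Lam t0 X - {a. (a, X) \<in> \<Delta>})))"
| "trans_aux \<Delta> t0 (NAbs a s) = MAbs a (trans_aux \<Delta> t0 s)"
| "trans_aux \<Delta> t0 (NFn f s) = MFn f (trans_aux \<Delta> t0 s)"
| "trans_aux \<Delta> t0 (NTup ts) = MTup (trans_aux_list \<Delta> t0 ts)"
| "trans_aux_list \<Delta> t0 [] = []"
| "trans_aux_list \<Delta> t0 (s # ss) = trans_aux \<Delta> t0 s # trans_aux_list \<Delta> t0 ss"

definition translate :: "'v fctx \<Rightarrow> ('f, 'v) nterm \<Rightarrow> ('f, 'v) mterm" where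
  "translate \<Delta> t = trans_aux \<Delta> t t"

end

theory Submission
  imports Defs
begin

text \<open>The translation keeps the position of every suspension \<open>\<pi>\<cdot>X\<close> and gives it the argument list
  \<open>\<pi>\<cdot>xs\<close>, where \<open>xs\<close> enumerates \<open>{a. \<pi>(a) \<in> \<Lambda>\<^sub>t(X)} - {a. a#X \<in> \<Delta>}\<close> in ascending order; so
  \<open>\<pi>\<^sup>-\<^sup>1\<cdot>xs\<close> is that sorted enumeration itself. Closedness condition (3) makes this set
  independent of the occurrence: for \<open>a\<close> not fresh for \<open>X\<close>, either \<open>\<pi>\<^sub>1(a) = \<pi>\<^sub>2(a)\<close>, or both images
  are abstracted above their occurrences and hence lie in \<open>\<Lambda>\<^sub>t(X)\<close>.\<close>

lemma apply_inverse_apply [simp]: "Perm.apply (inverse \<pi>) (Perm.apply \<pi> a) = a"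
  by (simp add: apply_inverse bij_is_inj)

lemma apply_apply_inverse [simp]: "Perm.apply \<pi> (Perm.apply (inverse \<pi>) a) = a"
  by (simp add: apply_inverse bij_is_surj surj_f_inv_f)

lemma image_apply_inverse: "Perm.apply (inverse \<pi>) ` A = {a. Perm.apply \<pi> a \<in> A}"
  by (auto intro: image_eqI[where x = "Perm.apply \<pi> _"])

definition susp_args :: "'v fctx \<Rightarrow> ('f, 'v) nterm \<Rightarrow> atom perm \<Rightarrow> 'v \<Rightarrow> atom list" where
  "susp_args \<Delta> t0 \<pi> X =
     map (Perm.apply \<pi>) (sorted_list_of_set (Perm.apply (inverse \<pi>) ` Lam t0 X - {a. (a, X) \<in> \<Delta>}))"

lemma mvar_occs_trans_aux:
  "mvar_occs (trans_aux \<Delta> t0 s) = (\<lambda>(p, \<pi>, X, B). (p, X, susp_args \<Delta> t0 \<pi> X)) ` var_occs s"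
proof (induction s)
  case (NTup ts)
  have "mvar_occs_list i (trans_aux_list \<Delta> t0 ts) =
          (\<lambda>(p, \<pi>, X, B). (p, X, susp_args \<Delta> t0 \<pi> X)) ` var_occs_list i ts" for i
    using NTup.IH by (induction ts arbitrary: i) (auto simp: image_Un image_image split_def)
  then show ?case by simp
qed (auto simp: susp_args_def image_image split_def)

lemma var_occs_list_position: "(p, occ) \<in> var_occs_list i ts \<Longrightarrow> \<exists>j q. p = j # q \<and> i \<le> j"
  by (induction ts arbitrary: i) fastforce+

lemma var_occs_position_unique:
  "(p, occ) \<in> var_occs s \<Longrightarrow> (p, occ') \<in> var_occs s \<Longrightarrow> occ = occ'"
proof (induction s arbitrary: p occ occ')
  case (NTup ts)
  have "(p, occ) \<in> var_occs_list i ts \<Longrightarrow> (p, occ') \<in> var_occs_list i ts \<Longrightarrow> occ = occ'" for i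
    using NTup.IH
  proof (induction ts arbitrary: i)
    case (Cons s ss)
    then show ?case
      by (auto dest: var_occs_list_position) metis+
  qed simp
  with NTup.prems show ?case by simp
qed (auto, blast+)

lemma mvar_occs_trans_aux_at_var_occ:
  assumes "(p, \<pi>, X, B) \<in> var_occs s" and "(p, X, xs) \<in> mvar_occs (trans_aux \<Delta> t0 s)"
  shows "xs = susp_args \<Delta> t0 \<pi> X"
proof -
  from assms(2) obtain \<pi>' B' where occ': "(p, \<pi>', X, B') \<in> var_occs s"
    and "xs = susp_args \<Delta> t0 \<pi>' X"
    unfolding mvar_occs_trans_aux by auto
  with var_occs_position_unique[OF assms(1) occ'] show ?thesis by simp
qed

lemma map_inverse_susp_args:
  "map (Perm.apply (inverse \<pi>)) (susp_args \<Delta> t0 \<pi> X) =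
     sorted_list_of_set ({a. Perm.apply \<pi> a \<in> Lam t0 X} - {a. (a, X) \<in> \<Delta>})"
  by (simp add: susp_args_def image_apply_inverse comp_def)

lemma var_occs_binders_subset_Lam: "(p, \<pi>, X, B) \<in> var_occs t \<Longrightarrow> B \<subseteq> Lam t X"
  unfolding Lam_def by blast

lemma closed_nterm_suspensions_agree:
  assumes "closed_nterm \<Delta> t"
    and "(p1, \<pi>1, X, B1) \<in> var_occs t" and "(p2, \<pi>2, X, B2) \<in> var_occs t"
    and "(a, X) \<notin> \<Delta>"
  shows "Perm.apply \<pi>1 a = Perm.apply \<pi>2 a \<or> Perm.apply \<pi>1 a \<in> B1 \<and> Perm.apply \<pi>2 a \<in> B2"
proof -
  have "\<forall>(p1, \<pi>1, X1, B1) \<in> var_occs t. \<forall>(p2, \<pi>2, X2, B2) \<in> var_occs t. \<forall>a.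
          X1 = X2 \<and> Perm.apply \<pi>1 a \<noteq> Perm.apply \<pi>2 a \<and>
          (Perm.apply \<pi>1 a \<notin> B1 \<or> Perm.apply \<pi>2 a \<notin> B2) \<longrightarrow> (a, X1) \<in> \<Delta>"
    using assms(1) unfolding closed_nterm_def by (elim conjE)
  from bspec[OF bspec[OF this assms(2), simplified] assms(3)] assms(4) show ?thesis by auto
qed

lemma closed_nterm_Lam_preimage_subset:
  assumes "closed_nterm \<Delta> t"
    and "(p1, \<pi>1, X, B1) \<in> var_occs t" and "(p2, \<pi>2, X, B2) \<in> var_occs t"
  shows "{a. Perm.apply \<pi>1 a \<in> Lam t X} - {a. (a, X) \<in> \<Delta>}
           \<subseteq> {a. Perm.apply \<pi>2 a \<in> Lam t X} - {a. (a, X) \<in> \<Delta>}"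
proof
  fix a
  assume "a \<in> {a. Perm.apply \<pi>1 a \<in> Lam t X} - {a. (a, X) \<in> \<Delta>}"
  with closed_nterm_suspensions_agree[OF assms, of a] var_occs_binders_subset_Lam[OF assms(3)]
  show "a \<in> {a. Perm.apply \<pi>2 a \<in> Lam t X} - {a. (a, X) \<in> \<Delta>}"
    by auto
qed

theorem mainTheorem7:
  fixes \<Delta> :: "'v fctx" and t :: "('f, 'v) nterm"
  assumes "finite \<Delta>"
    and "closed_nterm \<Delta> t"
    and "(p1, \<pi>1, X, B1) \<in> var_occs t"
    and "(p2, \<pi>2, X, B2) \<in> var_occs t"
    and "(p1, X, xs1) \<in> mvar_occs (translate \<Delta> t)"
    and "(p2, X, xs2) \<in> mvar_occs (translate \<Delta> t)"
  shows "map (\<lambda>a. Perm.apply (inverse \<pi>1) a) xs1 = map (\<lambda>a. Perm.apply (inverse \<pi>2) a) xs2"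
proof -
  have "xs1 = susp_args \<Delta> t \<pi>1 X" "xs2 = susp_args \<Delta> t \<pi>2 X"
    using assms(3-6) unfolding translate_def by (blast intro: mvar_occs_trans_aux_at_var_occ)+
  moreover have "{a. Perm.apply \<pi>1 a \<in> Lam t X} - {a. (a, X) \<in> \<Delta>}
                   = {a. Perm.apply \<pi>2 a \<in> Lam t X} - {a. (a, X) \<in> \<Delta>}"
    using closed_nterm_Lam_preimage_subset[OF assms(2,3,4)]
      closed_nterm_Lam_preimage_subset[OF assms(2,4,3)] by (rule subset_antisym)
  ultimately show ?thesis
    by (simp add: map_inverse_susp_args)
qed

end
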